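(* Let $\mathcal{U}$ be a universe of $n$ element types with frequencies $f:\mathcal{U}\to\{1,2,\dots\}$ and total $N=\sum_{e}f(e)$, partitioned into groups $\mathbf{g}_1,\dots,\mathbf{g}_\ell$ with $n_j=|\mathbf{g}_j|$. Let $w$ be a positive integer dividing $n$, and let $w_j=\frac{n_j}{n}w$ be positive integers. Consider (i) a one-row Count-Min sketch (CM) with a uniform hash scheme, i.e. a hash $\mathsf{h}:\mathcal{U}\to[w]$ under which every bin receives exactly $n/w$ element types, and (ii) a one-row Fair-Count-Min sketch (FCM) whose $w$ bins are split into disjoint blocks of sizes $w_1,\dots,w_\ell$, with a hash mapping each group $\mathbf{g}_j$ into block $j$ so that every bin of block $j$ receives exactly $n_j/w_j$ element types of $\mathbf{g}_j$. Then $\mathcal{L}_{FCM}=\mathcal{L}_{CM}=N\left(\frac{n}{w}-1\right)$; in particular the price of fairness $\mathcal{L}_{FCM}-\mathcal{L}_{CM}$ equals $0$.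
   Context: In a one-row sketch with hash $\mathsf{h}$, the additive error of $e$ is $\varepsilon_A(e)=\sum_{e'\neq e:\mathsf{h}(e')=\mathsf{h}(e)}f(e')$, and the total additive error is $\mathcal{L}=\sum_{e\in\mathcal{U}}\varepsilon_A(e)$. The price of fairness is $\mathcal{L}_{FCM}-\mathcal{L}_{CM}$. *)

theory Defs
  imports Complex_Main
begin

definition additive_error :: "'a set \<Rightarrow> ('a \<Rightarrow> nat) \<Rightarrow> ('a \<Rightarrow> nat) \<Rightarrow> 'a \<Rightarrow> nat" where
  "additive_error U f h e = (\<Sum>e'\<in>{e'\<in>U. e' \<noteq> e \<and> h e' = h e}. f e')"

definition total_error :: "'a set \<Rightarrow> ('a \<Rightarrow> nat) \<Rightarrow> ('a \<Rightarrow> nat) \<Rightarrow> nat" where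
  "total_error U f h = (\<Sum>e\<in>U. additive_error U f h e)"

end

theory Submission
  imports Defs
begin

text \<open>Summing the additive errors counts every ordered colliding pair \<open>(e, e')\<close> once, so
  swapping the order of summation charges each \<open>e'\<close> its frequency once for every other
  element of its bin. When every bin of both hashes holds the same number \<open>n/w\<close> of elements,
  both totals are therefore \<open>N (n/w - 1)\<close>. For the fair sketch this needs two observations:
  the bin of an element of group \<open>j\<close> lies in block \<open>j\<close> and thus contains only elements of
  that group, and \<open>w\<^sub>j = n\<^sub>j w / n\<close> makes the per-bin load \<open>n\<^sub>j / w\<^sub>j\<close> equal to \<open>n / w\<close>.\<close>

lemma total_error_eq_sum_bin_sizes:
  assumes "finite U"
  shows "total_error U f h = (\<Sum>e\<in>U. f e * (card {e'\<in>U. h e' = h e} - 1))"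
proof -
  have "total_error U f h = (\<Sum>e\<in>U. \<Sum>e'\<in>{e'\<in>U. e' \<noteq> e \<and> h e' = h e}. f e')"
    unfolding total_error_def additive_error_def ..
  also have "\<dots> = (\<Sum>e'\<in>U. \<Sum>e\<in>{e\<in>U. e' \<noteq> e \<and> h e' = h e}. f e')"
    by (rule sum.swap_restrict[OF assms assms])
  also have "\<dots> = (\<Sum>e'\<in>U. f e' * (card {e\<in>U. h e = h e'} - 1))"
  proof (rule sum.cong[OF refl])
    fix e' assume "e' \<in> U"
    have "{e\<in>U. e' \<noteq> e \<and> h e' = h e} = {e\<in>U. h e = h e'} - {e'}" by auto
    then show "(\<Sum>e\<in>{e\<in>U. e' \<noteq> e \<and> h e' = h e}. f e') = f e' * (card {e\<in>U. h e = h e'} - 1)"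
      using \<open>e' \<in> U\<close> assms by (simp add: card_Diff_singleton mult.commute)
  qed
  finally show ?thesis .
qed

lemma total_error_uniform_bins:
  assumes "finite U" and "\<And>e. e \<in> U \<Longrightarrow> card {e'\<in>U. h e' = h e} = k"
  shows "total_error U f h = (\<Sum>e\<in>U. f e) * (k - 1)"
  using assms by (simp add: total_error_eq_sum_bin_sizes sum_distrib_right)

lemma bin_within_group:
  assumes "(\<Union>j<l. g j) = U"
    and "\<And>i j. i < l \<Longrightarrow> j < l \<Longrightarrow> i \<noteq> j \<Longrightarrow> B i \<inter> B j = {}"
    and "\<And>j e. j < l \<Longrightarrow> e \<in> g j \<Longrightarrow> h e \<in> B j"
    and "j < l" and "e \<in> g j"
  shows "{e'\<in>U. h e' = h e} = {e'\<in>g j. h e' = h e}"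
proof (intro set_eqI iffI)
  fix x assume x: "x \<in> {e'\<in>U. h e' = h e}"
  then obtain i where "i < l" "x \<in> g i" using assms(1) by blast
  with assms(2-5) x have "i = j" by fastforce
  with \<open>x \<in> g i\<close> x show "x \<in> {e'\<in>g j. h e' = h e}" by simp
qed (use assms(1,4) in blast)

lemma group_size_eq_block_width_mult:
  fixes c wj w q :: nat
  assumes "real wj = real c / real (w * q) * real w" and "w > 0" and "q > 0"
  shows "c = wj * q"
proof -
  have "real wj * real q = real c"
    using assms by (simp add: field_simps)
  then show ?thesis by (metis of_nat_eq_iff of_nat_mult)
qed

theorem mainTheorem3:
  fixes U :: "'a set" and f :: "'a \<Rightarrow> nat" and l w :: nat
    and g :: "nat \<Rightarrow> 'a set" and wg :: "nat \<Rightarrow> nat"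
    and B :: "nat \<Rightarrow> nat set"
    and hCM hFCM :: "'a \<Rightarrow> nat"
  assumes finU: "finite U" and Une: "U \<noteq> {}"
    and fpos: "\<And>e. e \<in> U \<Longrightarrow> f e \<ge> 1"
    and g_part: "(\<Union>j<l. g j) = U"
    and g_disj: "\<And>i j. i < l \<Longrightarrow> j < l \<Longrightarrow> i \<noteq> j \<Longrightarrow> g i \<inter> g j = {}"
    and wpos: "w > 0" and wdvd: "w dvd card U"
    and wg_pos: "\<And>j. j < l \<Longrightarrow> wg j > 0"
    and wg_def: "\<And>j. j < l \<Longrightarrow> real (wg j) = real (card (g j)) / real (card U) * real w"
    \<comment> \<open>uniform CM hash\<close>
    and hCM_range: "\<And>e. e \<in> U \<Longrightarrow> hCM e < w"
    and hCM_uniform: "\<And>b. b < w \<Longrightarrow> card {e\<in>U. hCM e = b} = card U div w"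
    \<comment> \<open>FCM: disjoint blocks of sizes wg j partitioning the w bins\<close>
    and B_part: "(\<Union>j<l. B j) = {..<w}"
    and B_disj: "\<And>i j. i < l \<Longrightarrow> j < l \<Longrightarrow> i \<noteq> j \<Longrightarrow> B i \<inter> B j = {}"
    and B_card: "\<And>j. j < l \<Longrightarrow> card (B j) = wg j"
    and hFCM_range: "\<And>j e. j < l \<Longrightarrow> e \<in> g j \<Longrightarrow> hFCM e \<in> B j"
    and hFCM_uniform: "\<And>j b. j < l \<Longrightarrow> b \<in> B j \<Longrightarrow>
        card {e\<in>g j. hFCM e = b} = card (g j) div wg j"
  shows "real (total_error U f hFCM) = real (total_error U f hCM)
       \<and> real (total_error U f hCM) = real (\<Sum>e\<in>U. f e) * (real (card U) / real w - 1)
       \<and> real (total_error U f hFCM) - real (total_error U f hCM) = 0"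
proof -
  obtain q where q: "card U = w * q" using wdvd by blast
  have "q > 0" using q finU Une by (metis card_0_eq mult_0_right neq0_conv)
  have CM: "total_error U f hCM = (\<Sum>e\<in>U. f e) * (q - 1)"
    using finU by (rule total_error_uniform_bins) (simp add: hCM_range hCM_uniform q wpos)
  have FCM: "total_error U f hFCM = (\<Sum>e\<in>U. f e) * (q - 1)"
  proof (rule total_error_uniform_bins[OF finU])
    fix e assume "e \<in> U"
    then obtain j where j: "j < l" "e \<in> g j" using g_part by blast
    have "card (g j) = wg j * q"
      using wg_def[OF j(1)] wpos \<open>q > 0\<close> unfolding q by (rule group_size_eq_block_width_mult)
    then show "card {e'\<in>U. hFCM e' = hFCM e} = q"
      using bin_within_group[where B = B and h = hFCM, OF g_part B_disj hFCM_range j]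
        hFCM_uniform[OF j(1) hFCM_range[OF j]] wg_pos[OF j(1)] by simp
  qed
  have "real (card U) / real w - 1 = real (q - 1)"
    using q wpos \<open>q > 0\<close> by (simp add: of_nat_diff)
  with CM FCM show ?thesis by simp
qed

end
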